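(* Let $S$ be an instance of 3-Partition (with $n_1\ge\cdots\ge n_{3m}$), let $1\le k\le 3m$, let $i_1,\dots,i_{3m-k+1}$ be natural numbers and $W=\prod_{j=1}^{3m-k+1}(a_1b^{i_j}a_2)$. Suppose there is an index $J$ with $i_J=\max_j\{i_j\}=n_k$. Let $i'_1,\dots,i'_{3m-k}$ be the sequence $\langle i_j\rangle_j$ with the entry $i_J$ omitted, and $W'=\prod_{j=1}^{3m-k}(a_1b^{i'_j}a_2)$. Then for every string $T$ there is a computation $$W\,\|\,v_{4k-1}E_kv_{4k-1}\,v_{4k}F_kv_{4k}\,T\;\vdash^*\;W'\,\|\,T.$$
   Context: Queue automaton: a configuration is written $Q\,\|\,x$ ($Q$ = queue contents, $x$ = remaining input); a step from $Q\,\|\,\sigma x$ ($\sigma$ a symbol) goes either to $Q\sigma\,\|\,x$ (push) or, if $Q=\sigma Q'$, to $Q'\,\|\,x$ (match/pop). $\vdash^*$ is zero or more steps. An instance of 3-Partition is a sequence $S=\langle n_i:1\le i\le 3m\rangle$ of natural numbers such that $B=(\sum_{i=1}^{3m}n_i)/m$ is an integer and $B/4<n_i<B/2$ for all $i$; throughout, the $n_i$ are in non-increasing order. Alphabet $\{a_1,a_2,b,e_0,e,c_1,c_2,x,y\}$; $u^i$ is $i$ copies of $u$ concatenated, $\prod_{\ell=1}^k u_\ell=u_1\cdots u_k$. Define $U_\ell=a_1^2b^\ell a_2^2$, $v_\ell=c_1x^\ell y^\ell c_2$, $E_k=U_B^{3m-k}\,a_1b^{n_k}a_2\,U_B^{3m-k}$,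 $F_k=U_B^{2(3m-k)}$. *)

theory Defs
  imports Main
begin

datatype sym = a1 | a2 | b | e0 | e | c1 | c2 | x | y

text \<open>One step of the queue automaton on configurations (queue, remaining input).\<close>
inductive qstep :: "sym list \<times> sym list \<Rightarrow> sym list \<times> sym list \<Rightarrow> bool" where
  push: "qstep (Q, \<sigma> # w) (Q @ [\<sigma>], w)"
| pop:  "qstep (\<sigma> # Q, \<sigma> # w) (Q, w)"

abbreviation qsteps :: "sym list \<times> sym list \<Rightarrow> sym list \<times> sym list \<Rightarrow> bool" where
  "qsteps \<equiv> qstep\<^sup>*\<^sup>*"

definition three_partition_instance :: "nat list \<Rightarrow> nat \<Rightarrow> bool" where
  "three_partition_instance S m \<longleftrightarrow>
     m \<ge> 1 \<and> length S = 3 * m \<and> m dvd sum_list S \<and>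
     (\<forall>i < length S. 4 * S ! i > sum_list S div m \<and> 2 * S ! i < sum_list S div m) \<and>
     sorted_wrt (\<ge>) S"

definition bound :: "nat list \<Rightarrow> nat \<Rightarrow> nat" where
  "bound S m = sum_list S div m"

definition U :: "nat \<Rightarrow> sym list" where
  "U l = [a1, a1] @ replicate l b @ [a2, a2]"

definition v :: "nat \<Rightarrow> sym list" where
  "v l = [c1] @ replicate l x @ replicate l y @ [c2]"

text \<open>k is 1-based; n_k = S ! (k - 1).\<close>
definition E :: "nat list \<Rightarrow> nat \<Rightarrow> nat \<Rightarrow> sym list" where
  "E S m k = concat (replicate (3*m - k) (U (bound S m))) @ [a1] @ replicate (S ! (k - 1)) b @ [a2]
             @ concat (replicate (3*m - k) (U (bound S m)))"

definition F :: "nat list \<Rightarrow> nat \<Rightarrow> nat \<Rightarrow> sym list" where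
  "F S m k = concat (replicate (2 * (3*m - k)) (U (bound S m)))"

definition blocks :: "nat list \<Rightarrow> sym list" where
  "blocks ns = concat (map (\<lambda>i. [a1] @ replicate i b @ [a2]) ns)"

end

theory Submission
  imports Defs
begin

text \<open>A queue block \<open>a\<^sub>1 b\<^sup>i a\<^sub>2\<close> meeting an input word \<open>U\<^sub>B = a\<^sub>1\<^sup>2 b\<^sup>B a\<^sub>2\<^sup>2\<close> with \<open>i \<le> B\<close>
  is popped and its complement \<open>a\<^sub>1 b\<^sup>B\<^sup>-\<^sup>i a\<^sub>2\<close> pushed, so a run of \<open>U\<^sub>B\<close>'s complements a
  queue of blocks, and two runs restore it; all entries are at most \<open>n\<^sub>k \<le> B\<close>. While \<open>E\<^sub>k\<close> is read,
  the blocks before \<open>J\<close> are complemented, block \<open>J\<close> reaches the front and is popped by the middle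
  word \<open>a\<^sub>1 b\<^sup>n\<^sup>\<^sub>k a\<^sub>2\<close>, the blocks after it are complemented, and the unused \<open>U\<^sub>B\<close>'s are pushed.
  Reading \<open>F\<^sub>k\<close> then complements the surviving blocks back and pops those pushed \<open>U\<^sub>B\<close>'s. Each
  marker \<open>v\<close> is pushed when first read and popped when read again.\<close>

lemma qsteps_push_word: "qsteps (Q, w @ r) (Q @ w, r)"
proof (induction w arbitrary: Q)
  case Nil
  then show ?case by simp
next
  case (Cons s w)
  have "qstep (Q, s # w @ r) (Q @ [s], w @ r)" by (rule qstep.push)
  moreover have "qsteps (Q @ [s], w @ r) ((Q @ [s]) @ w, r)" by (rule Cons)
  ultimately show ?case by simp
qed

lemma qsteps_pop_word: "qsteps (w @ Q, w @ r) (Q, r)"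
proof (induction w)
  case Nil
  then show ?case by simp
next
  case (Cons s w)
  have "qstep (s # w @ Q, s # w @ r) (w @ Q, w @ r)" by (rule qstep.pop)
  with Cons show ?case by simp
qed

definition block :: "nat \<Rightarrow> sym list" where
  "block i = [a1] @ replicate i b @ [a2]"

definition U_rep :: "nat \<Rightarrow> nat \<Rightarrow> sym list" where
  "U_rep B q = concat (replicate q (U B))"

definition complement :: "nat \<Rightarrow> nat list \<Rightarrow> nat list" where
  "complement B ns = map (\<lambda>i. B - i) ns"

lemma blocks_Nil [simp]: "blocks [] = []"
  by (simp add: blocks_def)

lemma blocks_append [simp]: "blocks (xs @ ys) = blocks xs @ blocks ys"
  by (simp add: blocks_def)

lemma blocks_Cons: "blocks (i # xs) = block i @ blocks xs"
  by (simp add: blocks_def block_def)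

lemma U_rep_add: "U_rep B (p + q) = U_rep B p @ U_rep B q"
  by (simp add: U_rep_def replicate_add)

lemma U_rep_Suc: "U_rep B (Suc q) = U B @ U_rep B q"
  by (simp add: U_rep_def)

lemma complement_le: "\<forall>i\<in>set (complement B ns). i \<le> B"
  by (simp add: complement_def)

lemma length_complement [simp]: "length (complement B ns) = length ns"
  by (simp add: complement_def)

lemma complement_complement:
  assumes "\<forall>i\<in>set ns. i \<le> B"
  shows "complement B (complement B ns) = ns"
  using assms by (simp add: complement_def map_idI)

lemma qsteps_complement_block:
  assumes "i \<le> B"
  shows "qsteps (block i @ R, U B @ r) (R @ block (B - i), r)"
proof -
  have "U B @ r = [a1] @ [a1] @ replicate i b @ replicate (B - i) b @ [a2] @ [a2] @ r"
    using assms by (simp add: U_def flip: replicate_add)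
  then have "qsteps (block i @ R, U B @ r)
      (replicate i b @ [a2] @ R, [a1] @ replicate i b @ replicate (B - i) b @ [a2] @ [a2] @ r)"
    using qsteps_pop_word[of "[a1]"] by (simp add: block_def)
  also have "qsteps \<dots> (replicate i b @ [a2] @ R @ [a1],
      replicate i b @ replicate (B - i) b @ [a2] @ [a2] @ r)"
    using qsteps_push_word[of "replicate i b @ [a2] @ R" "[a1]"] by simp
  also have "qsteps \<dots> ([a2] @ R @ [a1], replicate (B - i) b @ [a2] @ [a2] @ r)"
    by (rule qsteps_pop_word)
  also have "qsteps \<dots> ([a2] @ R @ [a1] @ replicate (B - i) b, [a2] @ [a2] @ r)"
    using qsteps_push_word[of "[a2] @ R @ [a1]" "replicate (B - i) b"] by simp
  also have "qsteps \<dots> (R @ [a1] @ replicate (B - i) b, [a2] @ r)"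
    by (rule qsteps_pop_word)
  also have "qsteps \<dots> (R @ block (B - i), r)"
    using qsteps_push_word[of "R @ [a1] @ replicate (B - i) b" "[a2]"] by (simp add: block_def)
  finally show ?thesis .
qed

lemma qsteps_complement_blocks:
  assumes "\<forall>i\<in>set ns. i \<le> B"
  shows "qsteps (blocks ns @ R, U_rep B (length ns) @ r) (R @ blocks (complement B ns), r)"
  using assms
proof (induction ns arbitrary: R)
  case Nil
  then show ?case by (simp add: U_rep_def complement_def)
next
  case (Cons i ns)
  have "qsteps (block i @ blocks ns @ R, U B @ U_rep B (length ns) @ r)
      (blocks ns @ R @ block (B - i), U_rep B (length ns) @ r)"
    using Cons.prems qsteps_complement_block[of i B "blocks ns @ R"] by simp
  also have "qsteps \<dots> (R @ block (B - i) @ blocks (complement B ns), r)"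
    using Cons.IH[of "R @ block (B - i)"] Cons.prems by simp
  finally show ?case
    by (simp add: blocks_Cons U_rep_Suc complement_def)
qed

lemma qsteps_delete_block:
  assumes "\<forall>i\<in>set (pre @ post). i \<le> B"
  defines "j \<equiv> length pre" and "q \<equiv> length post"
  shows "qsteps (blocks pre @ block n @ blocks post,
                 w @ U_rep B j @ U_rep B q @ block n @ U_rep B q @ U_rep B j @ w @ r)
                (blocks (complement B pre) @ U_rep B q @ blocks (complement B post) @ U_rep B j, r)"
proof -
  let ?cpre = "blocks (complement B pre)" and ?cpost = "blocks (complement B post)"
  have "qsteps (blocks pre @ block n @ blocks post,
                w @ U_rep B j @ U_rep B q @ block n @ U_rep B q @ U_rep B j @ w @ r)
      (blocks pre @ block n @ blocks post @ w,
       U_rep B j @ U_rep B q @ block n @ U_rep B q @ U_rep B j @ w @ r)"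
    using qsteps_push_word[of "blocks pre @ block n @ blocks post" w] by simp
  also have "qsteps \<dots> (block n @ blocks post @ w @ ?cpre,
      U_rep B q @ block n @ U_rep B q @ U_rep B j @ w @ r)"
    using qsteps_complement_blocks[of pre B "block n @ blocks post @ w"] assms(1) by (simp add: j_def)
  also have "qsteps \<dots> (block n @ blocks post @ w @ ?cpre @ U_rep B q,
      block n @ U_rep B q @ U_rep B j @ w @ r)"
    using qsteps_push_word[of "block n @ blocks post @ w @ ?cpre" "U_rep B q"] by simp
  also have "qsteps \<dots> (blocks post @ w @ ?cpre @ U_rep B q, U_rep B q @ U_rep B j @ w @ r)"
    by (rule qsteps_pop_word)
  also have "qsteps \<dots> (w @ ?cpre @ U_rep B q @ ?cpost, U_rep B j @ w @ r)"
    using qsteps_complement_blocks[of post B "w @ ?cpre @ U_rep B q"] assms(1) by (simp add: q_def)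
  also have "qsteps \<dots> (w @ ?cpre @ U_rep B q @ ?cpost @ U_rep B j, w @ r)"
    using qsteps_push_word[of "w @ ?cpre @ U_rep B q @ ?cpost" "U_rep B j"] by simp
  also have "qsteps \<dots> (?cpre @ U_rep B q @ ?cpost @ U_rep B j, r)"
    by (rule qsteps_pop_word)
  finally show ?thesis .
qed

lemma qsteps_restore_blocks:
  assumes "\<forall>i\<in>set (pre @ post). i \<le> B"
  defines "j \<equiv> length pre" and "q \<equiv> length post"
  shows "qsteps (blocks (complement B pre) @ U_rep B q @ blocks (complement B post) @ U_rep B j,
                 w @ U_rep B j @ U_rep B q @ U_rep B q @ U_rep B j @ w @ r)
                (blocks pre @ blocks post, r)"
proof -
  let ?cpost = "blocks (complement B post)"
  have "qsteps (blocks (complement B pre) @ U_rep B q @ ?cpost @ U_rep B j,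
                w @ U_rep B j @ U_rep B q @ U_rep B q @ U_rep B j @ w @ r)
      (blocks (complement B pre) @ U_rep B q @ ?cpost @ U_rep B j @ w,
       U_rep B j @ U_rep B q @ U_rep B q @ U_rep B j @ w @ r)"
    using qsteps_push_word[of "blocks (complement B pre) @ U_rep B q @ ?cpost @ U_rep B j" w]
    by simp
  also have "qsteps \<dots> (U_rep B q @ ?cpost @ U_rep B j @ w @ blocks pre,
      U_rep B q @ U_rep B q @ U_rep B j @ w @ r)"
    using qsteps_complement_blocks[OF complement_le, of B pre "U_rep B q @ ?cpost @ U_rep B j @ w"] assms(1)
    by (simp add: j_def complement_complement)
  also have "qsteps \<dots> (?cpost @ U_rep B j @ w @ blocks pre, U_rep B q @ U_rep B j @ w @ r)"
    by (rule qsteps_pop_word)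
  also have "qsteps \<dots> (U_rep B j @ w @ blocks pre @ blocks post, U_rep B j @ w @ r)"
    using qsteps_complement_blocks[OF complement_le, of B post "U_rep B j @ w @ blocks pre"] assms(1)
    by (simp add: q_def complement_complement)
  also have "qsteps \<dots> (blocks pre @ blocks post, r)"
    using qsteps_pop_word[of "U_rep B j @ w"] by simp
  finally show ?thesis .
qed

lemma three_partition_instance_le_bound:
  assumes "three_partition_instance S m" and "i < length S"
  shows "S ! i \<le> bound S m"
  using assms by (fastforce simp: three_partition_instance_def bound_def)

theorem lemma7:
  fixes S :: "nat list" and m k :: nat and ns :: "nat list" and J :: nat and T :: "sym list"
  assumes "three_partition_instance S m"
    and "1 \<le> k" and "k \<le> 3 * m"
    and "length ns = 3 * m - k + 1"
    and "J < length ns"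
    and "ns ! J = Max (set ns)"
    and "ns ! J = S ! (k - 1)"
  shows "qsteps (blocks ns,
                 v (4*k - 1) @ E S m k @ v (4*k - 1) @ v (4*k) @ F S m k @ v (4*k) @ T)
                (blocks (take J ns @ drop (Suc J) ns), T)"
proof -
  define B where "B = bound S m"
  define pre where "pre = take J ns"
  define post where "post = drop (Suc J) ns"
  have ns: "ns = pre @ ns ! J # post"
    using assms(5) by (simp add: pre_def post_def id_take_nth_drop)
  have p: "3 * m - k = length pre + length post"
    using assms(4,5) by (simp add: pre_def post_def)
  have "ns ! J \<le> B"
    using three_partition_instance_le_bound[OF assms(1), of "k - 1"] assms(1-3,7)
    by (simp add: B_def three_partition_instance_def)
  then have "\<forall>i\<in>set ns. i \<le> B"
    using assms(5) unfolding assms(6) by (subst (asm) Max_le_iff) auto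
  then have le_B: "\<forall>i\<in>set (pre @ post). i \<le> B"
    unfolding pre_def post_def by (auto dest: in_set_takeD in_set_dropD)
  have "E S m k = U_rep B (length pre + length post) @ block (ns ! J)
                  @ U_rep B (length post + length pre)"
    unfolding E_def U_rep_def block_def B_def assms(7) p by (simp only: add.commute append_assoc)
  moreover have "F S m k = U_rep B (length pre + length post + length post + length pre)"
  proof -
    have "2 * (3 * m - k) = length pre + length post + length post + length pre"
      using p by simp
    then show ?thesis
      unfolding F_def U_rep_def B_def by (simp only:)
  qed
  moreover have "blocks ns = blocks pre @ block (ns ! J) @ blocks post"
    by (subst ns) (simp add: blocks_Cons)
  ultimately show ?thesis
    using rtranclp_trans[OF qsteps_delete_block[OF le_B] qsteps_restore_blocks[OF le_B]]
    unfolding pre_def[symmetric] post_def[symmetric] by (simp add: U_rep_add)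
qed

end
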